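(* Let $\mathbb{K}$ be a non-Archimedean valued field, $G$ a compactly generated topological group, and $E$ a normed $\mathbb{K}[G]$-module. Then every 1-quasicocycle $f : G \to E$ is bounded.
   Context: A non-Archimedean valued field is a field with an absolute value satisfying the ultrametric inequality. A normed $\mathbb{K}$-vector space has a norm satisfying $\|x\|=0$ iff $x=0$, $\|x+y\|\le\max\{\|x\|,\|y\|\}$, $\|\alpha x\|=|\alpha|_\mathbb{K}\|x\|$; a normed $\mathbb{K}[G]$-module is one on which $G$ acts by linear isometries. A 1-quasicocycle is a continuous map $f:G\to E$ such that $\delta^1 f(g,h)=g\cdot f(h)-f(gh)+f(g)$ is bounded on $G\times G$. *)

theory Defs
  imports "HOL-Analysis.Analysis" "HOL-Algebra.Generated_Groups"
begin

definition nonarch_abs :: "('k::field \<Rightarrow> real) \<Rightarrow> bool" where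
  "nonarch_abs av \<longleftrightarrow>
     (\<forall>x. av x \<ge> 0) \<and> (\<forall>x. av x = 0 \<longleftrightarrow> x = 0) \<and>
     (\<forall>x y. av (x * y) = av x * av y) \<and>
     (\<forall>x y. av (x + y) \<le> max (av x) (av y))"

definition topological_group :: "('g, 'b) monoid_scheme \<Rightarrow> 'g topology \<Rightarrow> bool" where
  "topological_group G T \<longleftrightarrow> group G \<and> topspace T = carrier G \<and>
     continuous_map (prod_topology T T) T (\<lambda>(x, y). x \<otimes>\<^bsub>G\<^esub> y) \<and>
     continuous_map T T (\<lambda>x. inv\<^bsub>G\<^esub> x)"

definition compactly_generated :: "('g, 'b) monoid_scheme \<Rightarrow> 'g topology \<Rightarrow> bool" where
  "compactly_generated G T \<longleftrightarrow>
     (\<exists>K. K \<subseteq> carrier G \<and> compactin T K \<and> generate G K = carrier G)"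

definition nonarch_normed_space ::
    "('k::field \<Rightarrow> real) \<Rightarrow> ('k \<Rightarrow> 'e::ab_group_add \<Rightarrow> 'e) \<Rightarrow> ('e \<Rightarrow> real) \<Rightarrow> bool" where
  "nonarch_normed_space av smul nrm \<longleftrightarrow>
     nonarch_abs av \<and> vector_space smul \<and>
     (\<forall>x. nrm x = 0 \<longleftrightarrow> x = 0) \<and>
     (\<forall>x y. nrm (x + y) \<le> max (nrm x) (nrm y)) \<and>
     (\<forall>a x. nrm (smul a x) = av a * nrm x)"

definition normed_KG_module ::
    "('k::field \<Rightarrow> real) \<Rightarrow> ('k \<Rightarrow> 'e::ab_group_add \<Rightarrow> 'e) \<Rightarrow> ('e \<Rightarrow> real)
     \<Rightarrow> ('g, 'b) monoid_scheme \<Rightarrow> ('g \<Rightarrow> 'e \<Rightarrow> 'e) \<Rightarrow> bool" where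
  "normed_KG_module av smul nrm G act \<longleftrightarrow>
     nonarch_normed_space av smul nrm \<and> group G \<and>
     (\<forall>g\<in>carrier G. Vector_Spaces.linear smul smul (act g)) \<and>
     (\<forall>g\<in>carrier G. \<forall>x. nrm (act g x) = nrm x) \<and>
     (\<forall>x. act \<one>\<^bsub>G\<^esub> x = x) \<and>
     (\<forall>g\<in>carrier G. \<forall>h\<in>carrier G. \<forall>x. act (g \<otimes>\<^bsub>G\<^esub> h) x = act g (act h x))"

definition continuous_to_normed ::
    "'g topology \<Rightarrow> ('e::ab_group_add \<Rightarrow> real) \<Rightarrow> ('g \<Rightarrow> 'e) \<Rightarrow> bool" where
  "continuous_to_normed T nrm f \<longleftrightarrow>
     (\<forall>g\<in>topspace T. \<forall>e>0. \<exists>U. openin T U \<and> g \<in> U \<and> (\<forall>h\<in>U. nrm (f h - f g) < e))"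

definition quasicocycle1 ::
    "('g, 'b) monoid_scheme \<Rightarrow> 'g topology \<Rightarrow> ('e::ab_group_add \<Rightarrow> real)
     \<Rightarrow> ('g \<Rightarrow> 'e \<Rightarrow> 'e) \<Rightarrow> ('g \<Rightarrow> 'e) \<Rightarrow> bool" where
  "quasicocycle1 G T nrm act f \<longleftrightarrow>
     continuous_to_normed T nrm f \<and>
     (\<exists>C. \<forall>g\<in>carrier G. \<forall>h\<in>carrier G.
        nrm (act g (f h) - f (g \<otimes>\<^bsub>G\<^esub> h) + f g) \<le> C)"

end

theory Submission
  imports Defs
begin

text \<open>Writing \<open>\<delta>f(g,h) = g\<cdot>f(h) - f(gh) + f(g)\<close>, we have \<open>f(gh) = g\<cdot>f(h) + f(g) - \<delta>f(g,h)\<close>;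
  as \<open>G\<close> acts by isometries and the norm is ultrametric,
  \<open>\<parallel>f(gh)\<parallel> \<le> max \<parallel>f(g)\<parallel> \<parallel>f(h)\<parallel> C\<close>, where \<open>C\<close> bounds \<open>\<delta>f\<close>. Hence a bound on a generating set
  propagates to the whole group without any growth in the word length. By continuity,
  \<open>f\<close> is bounded on a compact generating set.\<close>

lemma nonarch_abs_one:
  assumes "nonarch_abs av"
  shows "av 1 = 1"
proof -
  have mult: "\<And>x y. av (x * y) = av x * av y" and "av 1 \<noteq> 0"
    using assms unfolding nonarch_abs_def by auto
  then show ?thesis using mult[of 1 1] by simp
qed

lemma nonarch_abs_minus_one:
  assumes "nonarch_abs av"
  shows "av (-1) = 1"
proof -
  have "av ((-1) * (-1)) = av (-1) * av (-1)" and "av (-1) \<ge> 0"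
    using assms unfolding nonarch_abs_def by blast+
  then show ?thesis
    using nonarch_abs_one[OF assms] square_eq_1_iff[of "av (-1)"] by auto
qed

lemma nonarch_normed_space_norm_minus:
  assumes "nonarch_normed_space av smul nrm"
  shows "nrm (- x) = nrm x"
proof -
  have "module smul"
    using assms module_iff_vector_space unfolding nonarch_normed_space_def by blast
  then have "smul (-1) x = - x"
    by (simp add: module.scale_minus_left module.scale_one)
  moreover have "nrm (smul (-1) x) = av (-1) * nrm x" and "nonarch_abs av"
    using assms unfolding nonarch_normed_space_def by blast+
  ultimately show ?thesis
    using nonarch_abs_minus_one[of av] by simp
qed

lemma nonarch_normed_space_norm_add_diff_le:
  assumes "nonarch_normed_space av smul nrm"
  shows "nrm (x + y - z) \<le> max (nrm x) (max (nrm y) (nrm z))"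
proof -
  have ultra: "\<And>x y. nrm (x + y) \<le> max (nrm x) (nrm y)"
    using assms unfolding nonarch_normed_space_def by blast
  have "nrm (x + y - z) \<le> max (nrm (x + y)) (nrm (- z))"
    using ultra[of "x + y" "- z"] by simp
  then show ?thesis
    using ultra[of x y] nonarch_normed_space_norm_minus[OF assms, of z] by linarith
qed

lemma continuous_to_normed_bounded_on_compactin:
  assumes ultra: "\<And>x y. nrm (x + y) \<le> max (nrm x) (nrm y)"
    and cont: "continuous_to_normed T nrm f"
    and K: "compactin T K"
  shows "\<exists>M. \<forall>h\<in>K. nrm (f h) \<le> M"
proof -
  have "\<forall>g\<in>K. \<exists>U. openin T U \<and> g \<in> U \<and> (\<forall>h\<in>U. nrm (f h - f g) < 1)"
    using cont compactin_subset_topspace[OF K] unfolding continuous_to_normed_def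
    by (meson subsetD zero_less_one)
  then obtain U where U: "\<And>g. g \<in> K \<Longrightarrow> openin T (U g) \<and> g \<in> U g \<and> (\<forall>h\<in>U g. nrm (f h - f g) < 1)"
    by metis
  have "\<exists>F. finite F \<and> F \<subseteq> U ` K \<and> K \<subseteq> \<Union>F"
    using K U unfolding compactin_def by (metis (no_types, lifting) UN_I image_iff subsetI)
  then obtain K' where K': "K' \<subseteq> K" "finite K'" "K \<subseteq> (\<Union>g\<in>K'. U g)"
    by (metis finite_subset_image)
  have "nrm (f h) \<le> 1 + (\<Sum>g\<in>K'. \<bar>nrm (f g)\<bar>)" if h: "h \<in> K" for h
  proof -
    obtain g where g: "g \<in> K'" "h \<in> U g" using K'(3) h by blast
    have "nrm (f h) \<le> max (nrm (f h - f g)) (nrm (f g))"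
      using ultra[of "f h - f g" "f g"] by simp
    moreover have "nrm (f h - f g) < 1" using U g K'(1) by blast
    moreover have "\<bar>nrm (f g)\<bar> \<le> (\<Sum>g\<in>K'. \<bar>nrm (f g)\<bar>)"
      using g(1) K'(2) by (intro member_le_sum) auto
    moreover have "0 \<le> (\<Sum>g\<in>K'. \<bar>nrm (f g)\<bar>)" by (simp add: sum_nonneg)
    ultimately show ?thesis by linarith
  qed
  then show ?thesis by blast
qed

lemma quasicocycle_bounded_on_generate:
  fixes G :: "('g, 'b) monoid_scheme" (structure)
  assumes M: "normed_KG_module av smul nrm G act"
    and C: "\<And>g h. g \<in> carrier G \<Longrightarrow> h \<in> carrier G \<Longrightarrow>
      nrm (act g (f h) - f (g \<otimes> h) + f g) \<le> C"
    and K: "K \<subseteq> carrier G" "\<And>h. h \<in> K \<Longrightarrow> nrm (f h) \<le> B"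
    and x: "x \<in> generate G K"
  shows "nrm (f x) \<le> max C B"
proof -
  interpret group G using M unfolding normed_KG_module_def by blast
  have NS: "nonarch_normed_space av smul nrm"
    and iso: "\<And>g x. g \<in> carrier G \<Longrightarrow> nrm (act g x) = nrm x"
    using M unfolding normed_KG_module_def by auto
  note norm_add_diff_le = nonarch_normed_space_norm_add_diff_le[OF NS]
  have f1: "nrm (f \<one>) \<le> C"
    using C[of \<one> \<one>] iso by simp
  from x show ?thesis
  proof (induction x rule: generate.induct)
    case one
    show ?case using f1 by simp
  next
    case (incl h)
    show ?case using K(2)[OF incl] by simp
  next
    case (inv h)
    have h: "h \<in> carrier G" using inv K(1) by blast
    define d where "d = act h (f (inv h)) - f \<one> + f h"
    have "nrm d \<le> C" using C[of h "inv h"] h unfolding d_def by simp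
    have "act h (f (inv h)) = d + f \<one> - f h" unfolding d_def by simp
    then have "nrm (f (inv h)) = nrm (d + f \<one> - f h)"
      using iso[OF h] by metis
    also have "\<dots> \<le> max (nrm d) (max (nrm (f \<one>)) (nrm (f h)))" by (rule norm_add_diff_le)
    finally show ?case using \<open>nrm d \<le> C\<close> f1 K(2)[OF inv] by linarith
  next
    case (eng h1 h2)
    have h1: "h1 \<in> carrier G" and h2: "h2 \<in> carrier G"
      using eng generate_in_carrier[OF K(1)] by auto
    define d where "d = act h1 (f h2) - f (h1 \<otimes> h2) + f h1"
    have "nrm d \<le> C" using C[OF h1 h2] unfolding d_def by simp
    have "f (h1 \<otimes> h2) = act h1 (f h2) + f h1 - d" unfolding d_def by simp
    then have "nrm (f (h1 \<otimes> h2)) \<le> max (nrm (act h1 (f h2))) (max (nrm (f h1)) (nrm d))"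
      using norm_add_diff_le[of "act h1 (f h2)" "f h1" d] by simp
    then show ?case using iso[OF h1] \<open>nrm d \<le> C\<close> eng.IH by simp
  qed
qed

theorem proposition8p6:
  fixes av :: "'k::field \<Rightarrow> real"
    and smul :: "'k \<Rightarrow> 'e::ab_group_add \<Rightarrow> 'e"
    and nrm :: "'e \<Rightarrow> real"
    and G :: "('g, 'b) monoid_scheme"
    and T :: "'g topology"
    and act :: "'g \<Rightarrow> 'e \<Rightarrow> 'e"
    and f :: "'g \<Rightarrow> 'e"
  assumes "nonarch_abs av"
    and "topological_group G T"
    and "compactly_generated G T"
    and "normed_KG_module av smul nrm G act"
    and "quasicocycle1 G T nrm act f"
  shows "\<exists>B. \<forall>g\<in>carrier G. nrm (f g) \<le> B"
proof -
  obtain K where K: "K \<subseteq> carrier G" "compactin T K" "generate G K = carrier G"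
    using assms(3) unfolding compactly_generated_def by blast
  obtain C where C: "\<And>g h. g \<in> carrier G \<Longrightarrow> h \<in> carrier G \<Longrightarrow>
      nrm (act g (f h) - f (g \<otimes>\<^bsub>G\<^esub> h) + f g) \<le> C"
    using assms(5) unfolding quasicocycle1_def by blast
  have "\<And>x y. nrm (x + y) \<le> max (nrm x) (nrm y)"
    using assms(4) unfolding normed_KG_module_def nonarch_normed_space_def by blast
  moreover have "continuous_to_normed T nrm f"
    using assms(5) unfolding quasicocycle1_def by blast
  ultimately obtain M where M: "\<forall>h\<in>K. nrm (f h) \<le> M"
    using continuous_to_normed_bounded_on_compactin K(2) by blast
  have "nrm (f g) \<le> max C M" if "g \<in> carrier G" for g
    using quasicocycle_bounded_on_generate[OF assms(4) C K(1)] M that K(3) by blast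
  then show ?thesis by blast
qed

end
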